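(* Let $n\ge0$, let $T\in\mathcal{T}_n$, and let $\pi=\varphi(T)$. Then $\operatorname{des}(\pi)=\operatorname{cdes}(T)$.
   Context: $\mathcal{T}_n$ is the set of plane (ordered) rooted trees with $n$ edges whose edges are labeled bijectively by $\{1,\dots,n\}$. For a non-root vertex $c$ whose edge to its parent has label $\ell$, define recursively $W(c)=\ell\,U\,\ell$, where $U$ is the concatenation of $W(c')$ over the children $c'$ of $c$ from left to right; $\varphi(T)$ is the concatenation of $W(c)$ over the children $c$ of the root from left to right (i.e. the sequence of edge labels recorded along a left-to-right depth-first walk, each edge recorded when traversed downward and upward). For a sequence $\pi_1\cdots\pi_r$, $i\in\{1,\dots,r\}$ is a descent if $\pi_i>\pi_{i+1}$ or $i=r$, and $\operatorname{des}(\pi)$ counts descents; the number of cyclic descents is $\operatorname{cdes}(\pi_1\cdots\pi_r)=|\{i\in\{1,\dots,r\}:\pi_i>\pi_{i+1}\}|$ with the convention $\pi_{r+1}=\pi_1$. For a vertex $v$ of $T$ whose children edges have labels $a_1,\dots,a_d$ from left to right: if $v$ is not the root and its parent edge has label $\ell$, $\operatorname{cdes}(v)=\operatorname{cdes}(\ell a_1\cdots a_d)$; if $v$ is the root, $\operatorname{cdes}(v)=\operatorname{des}(a_1\cdots a_d)$. Finally $\operatorname{cdes}(T)=\sum_v\operatorname{cdes}(v)$ over all vertices $v$ of $T$. *)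

theory Defs
  imports Main
begin

text \<open>Plane (ordered) rooted trees with labelled edges: a vertex is given by the
left-to-right list of its children, each paired with the label of the edge
from the vertex to that child.\<close>
datatype ptree = Node "(nat \<times> ptree) list"

fun labels :: "ptree \<Rightarrow> nat list" where
  "labels (Node cs) = concat (map (\<lambda>(l, t). l # labels t) cs)"

definition T_set :: "nat \<Rightarrow> ptree set" where
  "T_set n = {T. distinct (labels T) \<and> set (labels T) = {1..n}}"

fun phi :: "ptree \<Rightarrow> nat list" where
  "phi (Node cs) = concat (map (\<lambda>(l, t). l # phi t @ [l]) cs)"

text \<open>Descents (position r always counts), 0-indexed positions.\<close>
definition des :: "nat list \<Rightarrow> nat" where
  "des xs = card {i. i < length xs \<and> (i = length xs - 1 \<or> xs ! i > xs ! (i + 1))}"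

definition cdes :: "nat list \<Rightarrow> nat" where
  "cdes xs = card {i. i < length xs \<and> xs ! i > xs ! ((i + 1) mod length xs)}"

text \<open>Sum of cdes(v) over all vertices of the subtree hanging below an edge labelled l.\<close>
fun cdes_sub :: "nat \<Rightarrow> ptree \<Rightarrow> nat" where
  "cdes_sub l (Node cs) =
     cdes (l # map fst cs) + sum_list (map (\<lambda>(l', t). cdes_sub l' t) cs)"

fun cdes_tree :: "ptree \<Rightarrow> nat" where
  "cdes_tree (Node cs) = des (map fst cs) + sum_list (map (\<lambda>(l, t). cdes_sub l t) cs)"

end

theory Submission
  imports Defs
begin

text \<open>Count only the descents between adjacent letters (inner_des); these split
additively at any letter shared by two factors of a word.  The word
l # phi t @ [l] of a subtree is l, the blocks l_i # phi t_i @ [l_i] of the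
children, and l again.  Cutting at the first and last letter of every block
leaves l l_1 ... l_d l, whose inner descents are cdes(l l_1 ... l_d), plus the
inner descents of the blocks, so induction gives inner_des (l # phi t @ [l]) =
cdes_sub l t.  At the root the same cut applies to phi T, and the final descent
counted by des occurs on both sides.\<close>

fun inner_des :: "nat list \<Rightarrow> nat" where
  "inner_des (x # y # xs) = (if y < x then 1 else 0) + inner_des (y # xs)"
| "inner_des _ = 0"

lemma inner_des_eq_card:
  "inner_des xs = card {i. Suc i < length xs \<and> xs ! Suc i < xs ! i}"
proof (induction xs rule: inner_des.induct)
  case (1 x y xs)
  let ?S = "{i. Suc i < length (y # xs) \<and> (y # xs) ! Suc i < (y # xs) ! i}"
  have "{i. Suc i < length (x # y # xs) \<and> (x # y # xs) ! Suc i < (x # y # xs) ! i}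
      = (if y < x then {0} else {}) \<union> Suc ` ?S"
    by (auto simp: less_Suc_eq_0_disj)
  moreover have "finite ?S"
    by (rule finite_subset[of _ "{..<length (y # xs)}"]) auto
  ultimately show ?case
    using "1.IH" by (simp add: card_image)
qed auto

lemma inner_des_append:
  "inner_des (xs @ y # ys) = inner_des (xs @ [y]) + inner_des (y # ys)"
  by (induction xs rule: inner_des.induct) auto

lemma des_eq_Suc_inner_des:
  assumes "xs \<noteq> []"
  shows "des xs = Suc (inner_des xs)"
proof -
  let ?S = "{i. Suc i < length xs \<and> xs ! Suc i < xs ! i}"
  have "{i. i < length xs \<and> (i = length xs - 1 \<or> xs ! i > xs ! (i + 1))}
      = insert (length xs - 1) ?S"
    using assms by auto
  moreover have "finite ?S"
    by (rule finite_subset[of _ "{..<length xs}"]) auto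
  moreover have "length xs - 1 \<notin> ?S"
    by auto
  ultimately show ?thesis
    by (simp add: des_def inner_des_eq_card)
qed

lemma cdes_eq_inner_des_snoc_hd:
  assumes "xs \<noteq> []"
  shows "cdes xs = inner_des (xs @ [hd xs])"
proof -
  have "(xs @ [hd xs]) ! Suc i = xs ! ((i + 1) mod length xs)" if "i < length xs" for i
  proof (cases "Suc i < length xs")
    case False
    then have "Suc i = length xs"
      using that by simp
    then show ?thesis
      using assms by (simp add: nth_append hd_conv_nth)
  qed (simp add: nth_append)
  then have "{i. i < length xs \<and> xs ! i > xs ! ((i + 1) mod length xs)}
      = {i. Suc i < length (xs @ [hd xs]) \<and> (xs @ [hd xs]) ! Suc i < (xs @ [hd xs]) ! i}"
    by (auto simp: nth_append)
  then show ?thesis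
    by (simp add: cdes_def inner_des_eq_card)
qed

lemma inner_des_concat_blocks:
  fixes f :: "'a \<Rightarrow> nat list"
  shows "inner_des (xs @ concat (map (\<lambda>(a, t). a # f t @ [a]) ps) @ ys)
       = inner_des (xs @ map fst ps @ ys) + (\<Sum>(a, t)\<leftarrow>ps. inner_des (a # f t @ [a]))"
proof (induction ps arbitrary: xs)
  case Nil
  then show ?case by simp
next
  case (Cons p ps)
  obtain a t where p: "p = (a, t)"
    by fastforce
  let ?rest = "concat (map (\<lambda>(a, t). a # f t @ [a]) ps) @ ys"
  have "inner_des (xs @ (a # f t @ [a]) @ ?rest)
      = inner_des (xs @ [a]) + inner_des (a # f t @ [a]) + inner_des (a # ?rest)"
    using inner_des_append[of xs a "f t @ a # ?rest"] inner_des_append[of "a # f t" a ?rest]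
    by simp
  also have "\<dots> = inner_des ((xs @ [a]) @ ?rest) + inner_des (a # f t @ [a])"
    using inner_des_append[of xs a ?rest] by simp
  finally show ?case
    using Cons.IH[of "xs @ [a]"] by (simp add: p)
qed

lemma inner_des_subtree_word:
  "inner_des (l # phi t @ [l]) = cdes_sub l t"
proof (induction t arbitrary: l)
  case (Node cs)
  have children: "(\<Sum>(a, t)\<leftarrow>cs. inner_des (a # phi t @ [a])) = (\<Sum>(a, t)\<leftarrow>cs. cdes_sub a t)"
    using Node.IH by (auto intro!: arg_cong[where f = sum_list] map_cong)
  show ?case
    using inner_des_concat_blocks[of "[l]" phi cs "[l]"]
    by (simp add: children cdes_eq_inner_des_snoc_hd)
qed

theorem lemma2p1:
  fixes n :: nat and T :: ptree
  assumes "T \<in> T_set n"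
  shows "des (phi T) = cdes_tree T"
proof (cases T)
  case (Node cs)
  have children: "(\<Sum>(a, t)\<leftarrow>cs. inner_des (a # phi t @ [a])) = (\<Sum>(a, t)\<leftarrow>cs. cdes_sub a t)"
    by (auto simp: inner_des_subtree_word intro!: arg_cong[where f = sum_list] map_cong)
  show ?thesis
  proof (cases "cs = []")
    case True
    then show ?thesis using Node by (simp add: des_def)
  next
    case False
    then have "phi T \<noteq> []"
      using Node by (cases cs) auto
    then show ?thesis
      using Node False inner_des_concat_blocks[of "[]" phi cs "[]"]
      by (simp add: des_eq_Suc_inner_des children)
  qed
qed

end
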